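(* There is an absolute constant $C>0$ such that the following holds. Let $(G,s,t)$ be an oriented serial superedge on $n$ vertices with principal subgraphs $(G_1,s_1,t_1),\dots,(G_k,s_k,t_k)$, each $G_i$ non-serial and having $n_i$ vertices. Then $$\sum_{i=1}^k n_i\,\big|\mathsf{ST}(G_i)/\mathrm{Aut}_{\mathrm{or}}(G_i,s_i,t_i)\big|\le C\,n\,\big|\mathsf{ST}(G)/\mathrm{Aut}_{\mathrm{or}}(G,s,t)\big|,$$ i.e. the left side is $O\big(n\,|\mathsf{ST}(G)/\mathrm{Aut}_{\mathrm{or}}(G,s,t)|\big)$.
   Context: All graphs are finite, simple and undirected. An oriented series-parallel graph is a triple $(G,s,t)$ where $G$ is a graph and $s\neq t$ are vertices, defined recursively: (i) $G$ is a single edge with vertex set $\{s,t\}$; or (ii) (serial superedge) there are $k\ge 2$ oriented series-parallel graphs $(G_1,s_1,t_1),\dots,(G_k,s_k,t_k)$ with $s_1=s$, $t_k=t$, $t_i=s_{i+1}$ for $1\le i<k$, $V(G_i)\cap V(G_{i+1})=\{s_{i+1}\}$, $V(G_i)\cap V(G_j)=\emptyset$ for $|i-j|\ge2$, and $G=G_1\cup\dots\cup G_k$; or (iii) (parallel superedge) there are $k\ge2$ oriented series-parallel graphs $(G_1,s,t),\dots,(G_k,s,t)$ with $V(G_i)\cap V(G_j)=\{s,t\}$ for $i\neq j$ and $G=G_1\cup\dots\cup G_k$. The $G_i$ are the principal subgraphs; a graph is non-serial if it is not a serial superedge. $\mathrm{Aut}_{\mathrm{or}}(H,u,v)$ is the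 group of automorphisms of $H$ fixing $u$ and $v$; $\mathsf{ST}(H)$ is the set of spanning trees of $H$, and $\mathsf{ST}(H)/\Gamma$ the set of orbits of spanning trees under the group $\Gamma$ (trees $A,B$ in the same orbit iff $A=\sigma(B)$ for some $\sigma\in\Gamma$). *)

theory Defs
  imports Complex_Main
begin

type_synonym sp_comp = "nat set \<times> nat set set \<times> nat \<times> nat"

definition simple_graph :: "nat set \<Rightarrow> nat set set \<Rightarrow> bool" where
  "simple_graph V E \<longleftrightarrow> finite V \<and> E \<subseteq> {{u, v} | u v. u \<in> V \<and> v \<in> V \<and> u \<noteq> v}"

definition cV :: "sp_comp \<Rightarrow> nat set" where "cV c = fst c"
definition cE :: "sp_comp \<Rightarrow> nat set set" where "cE c = fst (snd c)"
definition cs :: "sp_comp \<Rightarrow> nat" where "cs c = fst (snd (snd c))"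
definition ct :: "sp_comp \<Rightarrow> nat" where "ct c = snd (snd (snd c))"

definition serial_comb :: "nat set \<Rightarrow> nat set set \<Rightarrow> nat \<Rightarrow> nat \<Rightarrow> sp_comp list \<Rightarrow> bool" where
  "serial_comb V E s t comps \<longleftrightarrow>
     (let k = length comps in
       k \<ge> 2 \<and> cs (comps ! 0) = s \<and> ct (comps ! (k - 1)) = t \<and>
       (\<forall>i. i + 1 < k \<longrightarrow> ct (comps ! i) = cs (comps ! (i + 1))) \<and>
       (\<forall>i. i + 1 < k \<longrightarrow> cV (comps ! i) \<inter> cV (comps ! (i + 1)) = {cs (comps ! (i + 1))}) \<and>
       (\<forall>i j. i < k \<longrightarrow> j < k \<longrightarrow> i + 2 \<le> j \<longrightarrow> cV (comps ! i) \<inter> cV (comps ! j) = {}) \<and>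
       V = (\<Union>i<k. cV (comps ! i)) \<and> E = (\<Union>i<k. cE (comps ! i)))"

definition parallel_comb :: "nat set \<Rightarrow> nat set set \<Rightarrow> nat \<Rightarrow> nat \<Rightarrow> sp_comp list \<Rightarrow> bool" where
  "parallel_comb V E s t comps \<longleftrightarrow>
     (let k = length comps in
       k \<ge> 2 \<and> (\<forall>i<k. cs (comps ! i) = s \<and> ct (comps ! i) = t) \<and>
       (\<forall>i j. i < k \<longrightarrow> j < k \<longrightarrow> i \<noteq> j \<longrightarrow> cV (comps ! i) \<inter> cV (comps ! j) = {s, t}) \<and>
       V = (\<Union>i<k. cV (comps ! i)) \<and> E = (\<Union>i<k. cE (comps ! i)))"

inductive osp :: "nat set \<Rightarrow> nat set set \<Rightarrow> nat \<Rightarrow> nat \<Rightarrow> bool" where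
  edge: "s \<noteq> t \<Longrightarrow> osp {s, t} {{s, t}} s t"
| serial: "serial_comb V E s t comps \<Longrightarrow> list_all (\<lambda>c. osp (cV c) (cE c) (cs c) (ct c)) comps
            \<Longrightarrow> osp V E s t"
| parallel: "parallel_comb V E s t comps \<Longrightarrow> list_all (\<lambda>c. osp (cV c) (cE c) (cs c) (ct c)) comps
            \<Longrightarrow> osp V E s t"

definition serial_superedge_with :: "nat set \<Rightarrow> nat set set \<Rightarrow> nat \<Rightarrow> nat \<Rightarrow> sp_comp list \<Rightarrow> bool" where
  "serial_superedge_with V E s t comps \<longleftrightarrow>
     serial_comb V E s t comps \<and> list_all (\<lambda>c. osp (cV c) (cE c) (cs c) (ct c)) comps"

definition is_serial :: "nat set \<Rightarrow> nat set set \<Rightarrow> nat \<Rightarrow> nat \<Rightarrow> bool" where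
  "is_serial V E s t \<longleftrightarrow> (\<exists>comps. serial_superedge_with V E s t comps)"

definition non_serial :: "nat set \<Rightarrow> nat set set \<Rightarrow> nat \<Rightarrow> nat \<Rightarrow> bool" where
  "non_serial V E s t \<longleftrightarrow> \<not> is_serial V E s t"

definition connected_graph :: "nat set \<Rightarrow> nat set set \<Rightarrow> bool" where
  "connected_graph V E \<longleftrightarrow> (\<forall>u\<in>V. \<forall>v\<in>V. (\<lambda>x y. {x, y} \<in> E)\<^sup>*\<^sup>* u v)"

definition spanning_trees :: "nat set \<Rightarrow> nat set set \<Rightarrow> nat set set set" where
  "spanning_trees V E = {T. T \<subseteq> E \<and> connected_graph V T \<and> card T + 1 = card V}"

definition aut_or :: "nat set \<Rightarrow> nat set set \<Rightarrow> nat \<Rightarrow> nat \<Rightarrow> (nat \<Rightarrow> nat) set" where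
  "aut_or V E s t = {\<sigma>. bij_betw \<sigma> V V \<and>
      (\<forall>u\<in>V. \<forall>v\<in>V. {u, v} \<in> E \<longleftrightarrow> {\<sigma> u, \<sigma> v} \<in> E) \<and> \<sigma> s = s \<and> \<sigma> t = t}"

definition tree_image :: "(nat \<Rightarrow> nat) \<Rightarrow> nat set set \<Rightarrow> nat set set" where
  "tree_image \<sigma> T = (\<lambda>e. \<sigma> ` e) ` T"

definition st_orbits :: "nat set \<Rightarrow> nat set set \<Rightarrow> nat \<Rightarrow> nat \<Rightarrow> nat set set set set" where
  "st_orbits V E s t = (\<lambda>T. {tree_image \<sigma> T | \<sigma>. \<sigma> \<in> aut_or V E s t}) ` spanning_trees V E"

definition num_st_orbits :: "nat set \<Rightarrow> nat set set \<Rightarrow> nat \<Rightarrow> nat \<Rightarrow> nat" where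
  "num_st_orbits V E s t = card (st_orbits V E s t)"

end

theory Submission
  imports Defs
begin

(* Call t_1 = s_2, ..., t_(k-1) = s_k the junctions of the serial superedge. A non-serial part has
   no vertex other than its terminals whose deletion separates them, so the vertices of G other than
   s and t whose deletion separates s from t are exactly the junctions. Deleting t_j leaves s
   connected to precisely the vertices of G_1, ..., G_j other than t_j, so the junctions are told
   apart by how many vertices s still reaches. Hence every automorphism fixing s and t fixes every
   junction, maps each G_i onto itself and restricts to an automorphism of (G_i, s_i, t_i).
   Completing a spanning tree of G_i by fixed spanning trees of the other parts maps ST(G_i) into
   ST(G), and trees whose images lie in one Aut(G)-orbit lie in one Aut(G_i)-orbit; therefore
   |ST(G_i)/Aut(G_i)| <= |ST(G)/Aut(G)|. Finally n_i >= 2 and n_1 + ... + n_k = n + k - 1 give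
   n_1 + ... + n_k <= 2n, so the theorem holds with C = 2. *)


section \<open>Reachability and spanning trees\<close>

abbreviation reach :: "nat set set \<Rightarrow> nat \<Rightarrow> nat \<Rightarrow> bool" where
  "reach E \<equiv> (\<lambda>x y. {x, y} \<in> E)\<^sup>*\<^sup>*"

lemma reach_mono: "reach E x y \<Longrightarrow> E \<subseteq> F \<Longrightarrow> reach F x y"
  by (induction rule: rtranclp_induct) (auto intro: rtranclp.rtrancl_into_rtrancl)

lemma reach_sym: "reach E x y \<Longrightarrow> reach E y x"
  using symp_rtranclp[of "\<lambda>x y. {x, y} \<in> E"] by (auto simp: symp_def insert_commute)

lemma reach_map:
  assumes "\<And>x y. {x, y} \<in> E \<Longrightarrow> {f x, f y} \<in> F" and "reach E x y"
  shows "reach F (f x) (f y)"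
  using assms(2) by (induction rule: rtranclp_induct) (auto intro: rtranclp.rtrancl_into_rtrancl assms(1))

lemma reach_crossing_edge:
  "reach E a b \<Longrightarrow> a \<in> W \<Longrightarrow> b \<notin> W \<Longrightarrow> \<exists>u x. u \<in> W \<and> x \<notin> W \<and> {u, x} \<in> E"
  by (induction rule: rtranclp_induct) auto

lemma simple_graph_edge: "simple_graph V E \<Longrightarrow> {x, y} \<in> E \<Longrightarrow> x \<in> V \<and> y \<in> V \<and> x \<noteq> y"
  unfolding simple_graph_def by (auto simp: doubleton_eq_iff)

lemma simple_graph_edgeE:
  assumes "simple_graph V E" and "e \<in> E"
  obtains u v where "e = {u, v}" and "u \<in> V" and "v \<in> V" and "u \<noteq> v"
  using assms unfolding simple_graph_def by blast

lemma simple_graph_edge_subset: "simple_graph V E \<Longrightarrow> e \<in> E \<Longrightarrow> e \<subseteq> V"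
  unfolding simple_graph_def by auto

lemma simple_graph_finite_edges: "simple_graph V E \<Longrightarrow> finite E"
  using simple_graph_edge_subset[of V E] finite_subset[of E "Pow V"]
  by (auto simp: simple_graph_def)

lemma simple_graph_UN:
  assumes "finite I" and "\<And>i. i \<in> I \<Longrightarrow> simple_graph (A i) (B i)"
  shows "simple_graph (\<Union>i\<in>I. A i) (\<Union>i\<in>I. B i)"
proof -
  have "finite (\<Union>i\<in>I. A i)"
    using assms unfolding simple_graph_def by blast
  moreover have "e \<in> {{u, v} | u v. u \<in> (\<Union>i\<in>I. A i) \<and> v \<in> (\<Union>i\<in>I. A i) \<and> u \<noteq> v}"
    if e: "e \<in> (\<Union>i\<in>I. B i)" for e
  proof -
    obtain i where "i \<in> I" "e \<in> B i"
      using e by blast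
    then obtain u v where "e = {u, v}" "u \<in> A i" "v \<in> A i" "u \<noteq> v"
      using simple_graph_edgeE assms(2) by metis
    then show ?thesis
      using \<open>i \<in> I\<close> by blast
  qed
  ultimately show ?thesis
    unfolding simple_graph_def by blast
qed

lemma simple_graph_reach_in: "simple_graph V E \<Longrightarrow> reach E a x \<Longrightarrow> a \<in> V \<Longrightarrow> x \<in> V"
  by (erule rev_mp, induction rule: rtranclp_induct) (auto dest: simple_graph_edge)

definition avoiding :: "nat set set \<Rightarrow> nat \<Rightarrow> nat set set" where
  "avoiding E w = {e \<in> E. w \<notin> e}"

definition reachable_avoiding :: "nat set set \<Rightarrow> nat \<Rightarrow> nat \<Rightarrow> nat set" where
  "reachable_avoiding E w a = {x. reach (avoiding E w) a x}"

lemma avoiding_subset: "avoiding E w \<subseteq> E"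
  unfolding avoiding_def by blast

lemma avoiding_mono: "E \<subseteq> F \<Longrightarrow> avoiding E w \<subseteq> avoiding F w"
  unfolding avoiding_def by blast

lemma reachable_avoiding_subset:
  assumes "simple_graph V E" and "s \<in> V"
  shows "reachable_avoiding E w s \<subseteq> V"
proof
  fix x assume "x \<in> reachable_avoiding E w s"
  then have "reach (avoiding E w) s x"
    unfolding reachable_avoiding_def by simp
  then have "reach E s x"
    using avoiding_subset by (rule reach_mono)
  then show "x \<in> V"
    by (rule simple_graph_reach_in[OF assms(1) _ assms(2)])
qed

lemma reach_avoiding_ne: "reach (avoiding E w) a x \<Longrightarrow> x \<noteq> a \<Longrightarrow> x \<noteq> w"
  by (erule rtranclp.cases) (auto simp: avoiding_def)

definition two_terminal :: "nat set \<Rightarrow> nat set set \<Rightarrow> nat \<Rightarrow> nat \<Rightarrow> bool" where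
  "two_terminal V E s t \<longleftrightarrow> simple_graph V E \<and> s \<in> V \<and> t \<in> V \<and> s \<noteq> t"

(* The second conjunct is the invariant that series-parallel induction must carry in order to
   determine, inside a serial chain, which vertices s reaches once a junction is deleted. *)
definition st_connected :: "nat set \<Rightarrow> nat set set \<Rightarrow> nat \<Rightarrow> nat \<Rightarrow> bool" where
  "st_connected V E s t \<longleftrightarrow> reach E s t \<and> (\<forall>x \<in> V - {t}. reach (avoiding E t) s x)"

lemma st_connected_reach: "st_connected V E s t \<Longrightarrow> x \<in> V \<Longrightarrow> reach E s x"
  unfolding st_connected_def using reach_mono[OF _ avoiding_subset] by blast

lemma finite_spanning_trees: "simple_graph V E \<Longrightarrow> finite (spanning_trees V E)"
proof -
  assume "simple_graph V E"
  moreover have "spanning_trees V E \<subseteq> Pow E"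
    unfolding spanning_trees_def by blast
  ultimately show ?thesis
    using simple_graph_finite_edges by (meson finite_Pow_iff finite_subset)
qed

lemma connected_graphI: "(\<And>x. x \<in> V \<Longrightarrow> reach T s x) \<Longrightarrow> connected_graph V T"
  unfolding connected_graph_def by (blast intro: rtranclp_trans reach_sym)

lemma subtree_exists:
  assumes G: "simple_graph V E" and "s \<in> V" and conn: "\<And>x. x \<in> V \<Longrightarrow> reach E s x"
  shows "n < card V \<Longrightarrow> \<exists>W T. W \<subseteq> V \<and> s \<in> W \<and> card W = n + 1 \<and> T \<subseteq> E \<and> finite T \<and>
           card T = n \<and> (\<forall>e\<in>T. e \<subseteq> W) \<and> (\<forall>x\<in>W. reach T s x)"
proof (induction n)
  case 0
  show ?case using \<open>s \<in> V\<close> by (intro exI[of _ "{s}"] exI[of _ "{}"]) auto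
next
  case (Suc n)
  then obtain W T where WT: "W \<subseteq> V" "s \<in> W" "card W = n + 1" "T \<subseteq> E" "finite T"
      "card T = n" "\<forall>e\<in>T. e \<subseteq> W" "\<forall>x\<in>W. reach T s x"
    by auto
  have "finite W"
    using WT(1) G finite_subset by (auto simp: simple_graph_def)
  have "W \<noteq> V"
    using WT(3) Suc.prems by auto
  then obtain y where "y \<in> V" "y \<notin> W"
    using WT(1) by blast
  then obtain u x where ux: "u \<in> W" "x \<notin> W" "{u, x} \<in> E"
    using reach_crossing_edge[OF conn WT(2)] by blast
  have reach_W: "reach (insert {u, x} T) s z" if "z \<in> W" for z
    using WT(8) that reach_mono[of T s z "insert {u, x} T"] by blast
  have "reach (insert {u, x} T) s x"
    using reach_W[OF ux(1)] by (rule rtranclp.rtrancl_into_rtrancl) simp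
  with reach_W have "\<forall>z \<in> insert x W. reach (insert {u, x} T) s z"
    by blast
  moreover have "{u, x} \<notin> T"
    using WT(7) ux(2) by auto
  ultimately show ?case
    using WT ux \<open>finite W\<close> simple_graph_edge[OF G ux(3)]
    by (intro exI[of _ "insert x W"] exI[of _ "insert {u, x} T"]) auto
qed

lemma spanning_tree_exists:
  assumes G: "simple_graph V E" and "s \<in> V" and "\<And>x. x \<in> V \<Longrightarrow> reach E s x"
  shows "spanning_trees V E \<noteq> {}"
proof -
  have "finite V" "card V > 0"
    using G \<open>s \<in> V\<close> by (auto simp: simple_graph_def card_gt_0_iff)
  then obtain W T where WT: "W \<subseteq> V" "card W = card V" "T \<subseteq> E" "card T + 1 = card V"
      "\<forall>x\<in>W. reach T s x"
    using subtree_exists[OF assms, of "card V - 1"] by auto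
  then have "W = V"
    using \<open>finite V\<close> by (simp add: card_subset_eq)
  then have "T \<in> spanning_trees V E"
    using WT connected_graphI[of V T s] by (auto simp: spanning_trees_def)
  then show ?thesis by blast
qed

section \<open>Automorphisms fixing both terminals\<close>

lemma aut_orD:
  assumes "\<sigma> \<in> aut_or V E s t"
  shows "bij_betw \<sigma> V V" and "\<And>u v. u \<in> V \<Longrightarrow> v \<in> V \<Longrightarrow> {\<sigma> u, \<sigma> v} \<in> E \<longleftrightarrow> {u, v} \<in> E"
    and "\<sigma> s = s" and "\<sigma> t = t"
  using assms unfolding aut_or_def by auto

lemma aut_or_inj_on: "\<sigma> \<in> aut_or V E s t \<Longrightarrow> inj_on \<sigma> V"
  using aut_orD(1) bij_betw_imp_inj_on by blast

lemma aut_or_in: "\<sigma> \<in> aut_or V E s t \<Longrightarrow> x \<in> V \<Longrightarrow> \<sigma> x \<in> V"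
  using aut_orD(1) bij_betwE by blast

lemma id_in_aut_or: "id \<in> aut_or V E s t"
  unfolding aut_or_def by auto

lemma aut_or_comp:
  assumes \<sigma>: "\<sigma> \<in> aut_or V E s t" and \<rho>: "\<rho> \<in> aut_or V E s t"
  shows "\<rho> \<circ> \<sigma> \<in> aut_or V E s t"
  using aut_orD[OF \<sigma>] aut_orD[OF \<rho>] aut_or_in[OF \<sigma>]
  unfolding aut_or_def by (auto intro: bij_betw_trans)

lemma aut_or_inv_into:
  assumes \<sigma>: "\<sigma> \<in> aut_or V E s t" and "s \<in> V" "t \<in> V"
  shows "inv_into V \<sigma> \<in> aut_or V E s t"
proof -
  let ?\<tau> = "inv_into V \<sigma>"
  have bij: "bij_betw ?\<tau> V V"
    using aut_orD(1)[OF \<sigma>] by (rule bij_betw_inv_into)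
  have "{?\<tau> u, ?\<tau> v} \<in> E \<longleftrightarrow> {u, v} \<in> E" if "u \<in> V" "v \<in> V" for u v
    using aut_orD(2)[OF \<sigma>, of "?\<tau> u" "?\<tau> v"] bij_betwE[OF bij] aut_orD(1)[OF \<sigma>] that
    by (simp add: bij_betw_inv_into_right)
  moreover have "?\<tau> s = s" "?\<tau> t = t"
    using aut_or_inj_on[OF \<sigma>] aut_orD(3,4)[OF \<sigma>] \<open>s \<in> V\<close> \<open>t \<in> V\<close> by (metis inv_into_f_f)+
  ultimately show ?thesis
    using bij unfolding aut_or_def by auto
qed

lemma aut_or_avoiding_edge:
  assumes \<sigma>: "\<sigma> \<in> aut_or V E s t" and G: "simple_graph V E" and "w \<in> V"
    and e: "{x, y} \<in> avoiding E w"
  shows "{\<sigma> x, \<sigma> y} \<in> avoiding E (\<sigma> w)"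
proof -
  have "x \<in> V" "y \<in> V" "x \<noteq> w" "y \<noteq> w" "{x, y} \<in> E"
    using e simple_graph_edge[OF G] unfolding avoiding_def by auto
  then show ?thesis
    using aut_orD(2)[OF \<sigma>] inj_on_eq_iff[OF aut_or_inj_on[OF \<sigma>]] \<open>w \<in> V\<close>
    unfolding avoiding_def by auto
qed

lemma aut_or_image_reachable_avoiding:
  assumes \<sigma>: "\<sigma> \<in> aut_or V E s t" and G: "two_terminal V E s t" and "w \<in> V"
  shows "\<sigma> ` reachable_avoiding E w s = reachable_avoiding E (\<sigma> w) s"
proof -
  have simple: "simple_graph V E" and "s \<in> V" "t \<in> V"
    using G unfolding two_terminal_def by auto
  have image_le: "\<rho> ` reachable_avoiding E v s \<subseteq> reachable_avoiding E (\<rho> v) s"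
    if \<rho>: "\<rho> \<in> aut_or V E s t" and "v \<in> V" for \<rho> v
  proof
    fix y assume "y \<in> \<rho> ` reachable_avoiding E v s"
    then obtain x where "y = \<rho> x" and x: "reach (avoiding E v) s x"
      unfolding reachable_avoiding_def by blast
    have "reach (avoiding E (\<rho> v)) (\<rho> s) (\<rho> x)"
      using aut_or_avoiding_edge[OF \<rho> simple \<open>v \<in> V\<close>] x by (rule reach_map)
    then show "y \<in> reachable_avoiding E (\<rho> v) s"
      unfolding reachable_avoiding_def aut_orD(3)[OF \<rho>] \<open>y = \<rho> x\<close> by blast
  qed
  let ?\<tau> = "inv_into V \<sigma>"
  have \<tau>: "?\<tau> \<in> aut_or V E s t"
    using aut_or_inv_into[OF \<sigma> \<open>s \<in> V\<close> \<open>t \<in> V\<close>] .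
  have "y \<in> \<sigma> ` reachable_avoiding E w s" if y: "y \<in> reachable_avoiding E (\<sigma> w) s" for y
  proof -
    have "y \<in> V"
      using y reachable_avoiding_subset[OF simple \<open>s \<in> V\<close>] by blast
    then have "y = \<sigma> (?\<tau> y)"
      using aut_orD(1)[OF \<sigma>] by (simp add: bij_betw_inv_into_right)
    moreover have "?\<tau> (\<sigma> w) = w"
      using aut_or_inj_on[OF \<sigma>] \<open>w \<in> V\<close> by (rule inv_into_f_f)
    then have "?\<tau> y \<in> reachable_avoiding E w s"
      using image_le[OF \<tau> aut_or_in[OF \<sigma> \<open>w \<in> V\<close>]] y by auto
    ultimately show ?thesis
      by (rule image_eqI)
  qed
  then show ?thesis
    using image_le[OF \<sigma> \<open>w \<in> V\<close>] by blast
qed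

lemma tree_image_id: "tree_image id T = T"
  unfolding tree_image_def by simp

lemma tree_image_comp: "tree_image (\<rho> \<circ> \<sigma>) T = tree_image \<rho> (tree_image \<sigma> T)"
  unfolding tree_image_def by (auto simp: image_comp)

definition tree_orbit :: "(nat \<Rightarrow> nat) set \<Rightarrow> nat set set \<Rightarrow> nat set set set" where
  "tree_orbit \<Gamma> T = {tree_image \<sigma> T | \<sigma>. \<sigma> \<in> \<Gamma>}"

lemma st_orbits_eq: "st_orbits V E s t = tree_orbit (aut_or V E s t) ` spanning_trees V E"
  unfolding st_orbits_def tree_orbit_def ..

lemma tree_orbit_self: "T \<in> tree_orbit (aut_or V E s t) T"
proof -
  have "T = tree_image id T"
    by (simp add: tree_image_id)
  then show ?thesis
    unfolding tree_orbit_def using id_in_aut_or by blast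
qed

lemma tree_orbit_tree_image_subset:
  assumes "\<sigma> \<in> aut_or V E s t"
  shows "tree_orbit (aut_or V E s t) (tree_image \<sigma> T) \<subseteq> tree_orbit (aut_or V E s t) T"
proof
  fix X assume "X \<in> tree_orbit (aut_or V E s t) (tree_image \<sigma> T)"
  then obtain \<rho> where "\<rho> \<in> aut_or V E s t" and "X = tree_image \<rho> (tree_image \<sigma> T)"
    unfolding tree_orbit_def by blast
  then have "\<rho> \<circ> \<sigma> \<in> aut_or V E s t" and "X = tree_image (\<rho> \<circ> \<sigma>) T"
    using aut_or_comp[OF assms] by (simp_all add: tree_image_comp)
  then show "X \<in> tree_orbit (aut_or V E s t) T"
    unfolding tree_orbit_def by blast
qed

lemma card_image_le_if_factors:
  assumes "finite (g ` B)" and "f ` A \<subseteq> B"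
    and "\<And>a b. a \<in> A \<Longrightarrow> b \<in> A \<Longrightarrow> g (f a) = g (f b) \<Longrightarrow> h a = h b"
  shows "card (h ` A) \<le> card (g ` B)"
proof -
  define \<phi> where "\<phi> y = h (SOME a. a \<in> A \<and> g (f a) = y)" for y
  have "h a = \<phi> (g (f a))" if "a \<in> A" for a
  proof -
    let ?b = "SOME b. b \<in> A \<and> g (f b) = g (f a)"
    have "?b \<in> A \<and> g (f ?b) = g (f a)"
      by (rule someI[of _ a]) (use that in simp)
    then show ?thesis
      unfolding \<phi>_def using assms(3) that by metis
  qed
  then have "h ` A = \<phi> ` g ` f ` A"
    by (auto simp: image_image)
  moreover have "g ` f ` A \<subseteq> g ` B"
    using assms(2) by (rule image_mono)
  moreover have "finite (g ` f ` A)"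
    using assms(1) \<open>g ` f ` A \<subseteq> g ` B\<close> by (rule finite_subset[rotated])
  ultimately have "card (h ` A) \<le> card (g ` f ` A)"
    by (simp add: card_image_le)
  also have "\<dots> \<le> card (g ` B)"
    using assms(1) \<open>g ` f ` A \<subseteq> g ` B\<close> by (rule card_mono)
  finally show ?thesis .
qed

section \<open>Serial chains\<close>

locale serial_chain =
  fixes V :: "nat set" and E :: "nat set set" and s t :: nat and comps :: "sp_comp list"
  assumes comb: "serial_comb V E s t comps"
    and two_terminal_comp: "\<And>i. i < length comps \<Longrightarrow>
      two_terminal (cV (comps ! i)) (cE (comps ! i)) (cs (comps ! i)) (ct (comps ! i))"
begin

abbreviation "k \<equiv> length comps"
abbreviation "Vi i \<equiv> cV (comps ! i)"
abbreviation "Ei i \<equiv> cE (comps ! i)"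
abbreviation "si i \<equiv> cs (comps ! i)"
abbreviation "ti i \<equiv> ct (comps ! i)"

lemma two_le_k: "2 \<le> k"
  and si_0: "si 0 = s"
  and ti_last: "ti (k - 1) = t"
  and ti_eq_si_Suc: "Suc i < k \<Longrightarrow> ti i = si (Suc i)"
  and Vi_inter_Suc: "Suc i < k \<Longrightarrow> Vi i \<inter> Vi (Suc i) = {si (Suc i)}"
  and Vi_disjoint: "j < k \<Longrightarrow> i + 2 \<le> j \<Longrightarrow> Vi i \<inter> Vi j = {}"
  and V_eq: "V = (\<Union>i<k. Vi i)"
  and E_eq: "E = (\<Union>i<k. Ei i)"
  using comb unfolding serial_comb_def Let_def by auto

lemma simple_graph_Vi: "i < k \<Longrightarrow> simple_graph (Vi i) (Ei i)"
  and si_in: "i < k \<Longrightarrow> si i \<in> Vi i"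
  and ti_in: "i < k \<Longrightarrow> ti i \<in> Vi i"
  and si_ne_ti: "i < k \<Longrightarrow> si i \<noteq> ti i"
  using two_terminal_comp unfolding two_terminal_def by auto

lemma finite_Vi: "i < k \<Longrightarrow> finite (Vi i)"
  using simple_graph_Vi unfolding simple_graph_def by blast

lemma Vi_subset: "i < k \<Longrightarrow> Vi i \<subseteq> V"
  using V_eq by blast

lemma Ei_subset: "i < k \<Longrightarrow> Ei i \<subseteq> E"
  using E_eq by blast

lemma shared_vertex:
  assumes "i < j" and "j < k" and "x \<in> Vi i" and "x \<in> Vi j"
  shows "j = Suc i \<and> x = ti i"
proof (cases "i + 2 \<le> j")
  case True
  then show ?thesis
    using Vi_disjoint[OF assms(2)] assms(3,4) by blast
next
  case False
  then have "j = Suc i"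
    using assms(1) by simp
  then show ?thesis
    using Vi_inter_Suc[of i] ti_eq_si_Suc[of i] assms by auto
qed

lemma shared_vertices_eq:
  assumes "i < k" and "j < k" and "i \<noteq> j" and "u \<in> Vi i \<inter> Vi j" and "v \<in> Vi i \<inter> Vi j"
  shows "u = v"
proof (cases "i < j")
  case True
  then show ?thesis
    using shared_vertex[OF True assms(2)] assms(4,5) by blast
next
  case False
  then have "j < i"
    using assms(3) by simp
  then show ?thesis
    using shared_vertex[OF _ assms(1)] assms(4,5) by blast
qed

lemma shared_vertex_junction:
  assumes "i < k" and "m < k" and "i \<noteq> m" and "x \<in> Vi i" and "x \<in> Vi m"
  shows "\<exists>j. Suc j < k \<and> x = ti j"
proof (cases "i < m")
  case True
  then show ?thesis
    using shared_vertex[OF True assms(2,4,5)] assms(2) by blast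
next
  case False
  then have "m < i"
    using assms(3) by simp
  then show ?thesis
    using shared_vertex[OF _ assms(1,5,4)] assms(1) by blast
qed

lemma ti_notin_earlier: "i < j \<Longrightarrow> j < k \<Longrightarrow> ti j \<notin> Vi i"
  using shared_vertex[of i j "ti j"] ti_in ti_eq_si_Suc si_ne_ti by force

lemma si_notin_later: "i < j \<Longrightarrow> j < k \<Longrightarrow> si i \<notin> Vi j"
  using shared_vertex[of i j "si i"] si_in si_ne_ti by force

lemma t_notin_earlier: "Suc i < k \<Longrightarrow> t \<notin> Vi i"
  using ti_notin_earlier[of i "k - 1"] ti_last by simp

lemma s_notin_later: "0 < j \<Longrightarrow> j < k \<Longrightarrow> s \<notin> Vi j"
  using si_notin_later[of 0 j] si_0 by simp

lemma s_in_Vi_0: "s \<in> Vi 0"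
proof -
  have "0 < k"
    using two_le_k by linarith
  then show ?thesis
    using si_in si_0 by blast
qed

lemma t_in_Vi_last: "t \<in> Vi (k - 1)"
proof -
  have "k - 1 < k"
    using two_le_k by linarith
  then show ?thesis
    using ti_in ti_last by blast
qed

lemma edge_in_component:
  assumes "i < k" and "{u, v} \<in> E" and "u \<in> Vi i" and "v \<in> Vi i"
  shows "{u, v} \<in> Ei i"
proof -
  obtain m where m: "m < k" "{u, v} \<in> Ei m"
    using assms(2) E_eq by blast
  then have "u \<in> Vi m" "v \<in> Vi m" "u \<noteq> v"
    using simple_graph_edge[OF simple_graph_Vi] by blast+
  then have "m = i"
    using shared_vertices_eq[OF assms(1) m(1)] assms(3,4) by blast
  then show ?thesis
    using m by simp
qed

lemma edge_in_Ei_iff: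
  assumes "i < k" and "u \<in> Vi i" and "v \<in> Vi i"
  shows "{u, v} \<in> Ei i \<longleftrightarrow> {u, v} \<in> E"
  using edge_in_component[OF assms(1) _ assms(2,3)] Ei_subset[OF assms(1)] by blast

lemma Ei_disjoint:
  assumes "i < k" and "j < k" and "i \<noteq> j"
  shows "Ei i \<inter> Ei j = {}"
proof (rule ccontr)
  assume "Ei i \<inter> Ei j \<noteq> {}"
  then obtain e where e: "e \<in> Ei i" "e \<in> Ei j"
    by blast
  obtain u v where "e = {u, v}" "u \<noteq> v"
    using simple_graph_edgeE[OF simple_graph_Vi[OF assms(1)] e(1)] by metis
  moreover have "e \<subseteq> Vi i \<inter> Vi j"
    using simple_graph_edge_subset[OF simple_graph_Vi] assms e by blast
  ultimately show False
    using shared_vertices_eq[OF assms] by blast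
qed

lemma component_edges_avoiding: "i < k \<Longrightarrow> w \<notin> Vi i \<Longrightarrow> Ei i \<subseteq> avoiding E w"
  using Ei_subset simple_graph_edge_subset[OF simple_graph_Vi] unfolding avoiding_def by blast

lemma reach_along:
  assumes "a \<le> b" and "b < k" and "\<And>m. a \<le> m \<Longrightarrow> m \<le> b \<Longrightarrow> reach X (si m) (ti m)"
  shows "reach X (si a) (ti b)"
  using assms
proof (induction b)
  case 0
  then show ?case by simp
next
  case (Suc b)
  show ?case
  proof (cases "a = Suc b")
    case True
    then show ?thesis
      using Suc.prems(3) by simp
  next
    case False
    then have "reach X (si a) (si (Suc b))"
      using Suc ti_eq_si_Suc[of b] by simp
    moreover have "reach X (si (Suc b)) (ti (Suc b))"
      using Suc.prems(1,3) by simp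
    ultimately show ?thesis
      by (rule rtranclp_trans)
  qed
qed

lemma reach_to_si:
  assumes "i < k" and "\<And>m. m < i \<Longrightarrow> reach X (si m) (ti m)"
  shows "reach X s (si i)"
proof (cases i)
  case 0
  then show ?thesis
    using si_0 by simp
next
  case (Suc j)
  have "reach X (si 0) (ti j)"
  proof (rule reach_along)
    fix m assume "m \<le> j"
    then show "reach X (si m) (ti m)"
      using assms(2) Suc by simp
  qed (use assms Suc in auto)
  then show ?thesis
    using si_0 ti_eq_si_Suc[of j] Suc assms(1) by simp
qed

lemma reach_from_ti:
  assumes "i < k" and "\<And>m. i < m \<Longrightarrow> m < k \<Longrightarrow> reach X (si m) (ti m)"
  shows "reach X (ti i) t"
proof (cases "Suc i < k")
  case False
  then have "i = k - 1"
    using assms(1) by simp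
  then show ?thesis
    using ti_last by simp
next
  case True
  have "reach X (si (Suc i)) (ti (k - 1))"
  proof (rule reach_along)
    fix m assume "Suc i \<le> m" "m \<le> k - 1"
    then show "reach X (si m) (ti m)"
      using assms(2) True by simp
  qed (use True in auto)
  then show ?thesis
    using ti_last ti_eq_si_Suc[OF True] by simp
qed

lemma reach_serial:
  assumes "\<And>i. i < k \<Longrightarrow> reach (Ei i) (si i) (ti i)"
  shows "reach E s t"
proof -
  have "reach E (si 0) (ti (k - 1))"
  proof (rule reach_along)
    fix m assume "m \<le> k - 1"
    then have "m < k"
      using two_le_k by simp
    show "reach E (si m) (ti m)"
      using assms[OF \<open>m < k\<close>] Ei_subset[OF \<open>m < k\<close>] by (rule reach_mono)
  qed (use two_le_k in auto)
  then show ?thesis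
    using si_0 ti_last by simp
qed

lemma reach_avoiding_t_serial:
  assumes comp: "\<And>i. i < k \<Longrightarrow> st_connected (Vi i) (Ei i) (si i) (ti i)"
    and x: "x \<in> Vi i" "x \<noteq> t" and "i < k"
  shows "reach (avoiding E t) s x"
proof -
  have early: "reach (avoiding E t) (si m) y" if "Suc m < k" "y \<in> Vi m" for m y
  proof -
    have "m < k"
      using that(1) by simp
    have "reach (Ei m) (si m) y"
      using comp[OF \<open>m < k\<close>] that(2) by (rule st_connected_reach)
    then show ?thesis
      using component_edges_avoiding[OF \<open>m < k\<close> t_notin_earlier[OF that(1)]] by (rule reach_mono)
  qed
  have "reach (avoiding E t) s (si i)"
  proof (rule reach_to_si[OF \<open>i < k\<close>])
    fix m assume "m < i"
    then show "reach (avoiding E t) (si m) (ti m)"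
      using early ti_in \<open>i < k\<close> by simp
  qed
  moreover have "reach (avoiding E t) (si i) x"
  proof (cases "Suc i < k")
    case True
    then show ?thesis
      using early x(1) by blast
  next
    case False
    then have "i = k - 1"
      using \<open>i < k\<close> by simp
    then have "ti i = t"
      using ti_last by simp
    then have "reach (avoiding (Ei i) t) (si i) x"
      using comp[OF \<open>i < k\<close>] x unfolding st_connected_def by auto
    then show ?thesis
      using avoiding_mono[OF Ei_subset[OF \<open>i < k\<close>]] by (rule reach_mono)
  qed
  ultimately show ?thesis
    by (rule rtranclp_trans)
qed

lemma st_connected_serial:
  assumes "\<And>i. i < k \<Longrightarrow> st_connected (Vi i) (Ei i) (si i) (ti i)"
  shows "st_connected V E s t"
proof -
  have "reach E s t"
    using assms unfolding st_connected_def by (intro reach_serial) blast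
  moreover have "reach (avoiding E t) s x" if "x \<in> V - {t}" for x
  proof -
    have "x \<in> (\<Union>i<k. Vi i)"
      using that V_eq by simp
    then obtain i where "i < k" "x \<in> Vi i"
      by blast
    then show ?thesis
      using reach_avoiding_t_serial[OF assms] that by blast
  qed
  ultimately show ?thesis
    unfolding st_connected_def by blast
qed

lemma two_terminal_serial: "two_terminal V E s t"
proof -
  have "simple_graph V E"
    unfolding V_eq E_eq by (rule simple_graph_UN) (use simple_graph_Vi in auto)
  moreover have "t \<notin> Vi 0"
    using t_notin_earlier[of 0] two_le_k by simp
  moreover have "0 < k" "k - 1 < k"
    using two_le_k by linarith+
  then have "Vi 0 \<subseteq> V" "Vi (k - 1) \<subseteq> V"
    using Vi_subset by blast+
  ultimately show ?thesis
    unfolding two_terminal_def using s_in_Vi_0 t_in_Vi_last by blast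
qed

definition prefix_vertices :: "nat \<Rightarrow> nat set" where
  "prefix_vertices j = (\<Union>i\<le>j. Vi i)"

lemma prefix_vertices_0: "prefix_vertices 0 = Vi 0"
  unfolding prefix_vertices_def by simp

lemma prefix_vertices_Suc: "prefix_vertices (Suc j) = prefix_vertices j \<union> Vi (Suc j)"
  unfolding prefix_vertices_def by (auto simp: atMost_Suc)

lemma prefix_vertices_last: "prefix_vertices (k - 1) = V"
proof -
  have "{..k - 1} = {..<k}"
    using two_le_k by auto
  then show ?thesis
    unfolding prefix_vertices_def V_eq by simp
qed

lemma Vi_subset_prefix_vertices: "i \<le> j \<Longrightarrow> Vi i \<subseteq> prefix_vertices j"
  unfolding prefix_vertices_def by blast

lemma prefix_vertices_subset: "j < k \<Longrightarrow> prefix_vertices j \<subseteq> V"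
  using prefix_vertices_last Vi_subset_prefix_vertices[of _ "k - 1"]
  unfolding prefix_vertices_def by auto

lemma finite_prefix_vertices: "j < k \<Longrightarrow> finite (prefix_vertices j)"
  unfolding prefix_vertices_def using finite_Vi by simp

lemma ti_in_prefix_vertices: "j < k \<Longrightarrow> ti j \<in> prefix_vertices j"
  using ti_in Vi_subset_prefix_vertices by blast

lemma t_notin_prefix_vertices: "Suc j < k \<Longrightarrow> t \<notin> prefix_vertices j"
  unfolding prefix_vertices_def using t_notin_earlier by fastforce

lemma prefix_vertices_inter_Suc:
  assumes "Suc j < k"
  shows "prefix_vertices j \<inter> Vi (Suc j) = {si (Suc j)}"
proof
  show "{si (Suc j)} \<subseteq> prefix_vertices j \<inter> Vi (Suc j)"
    using ti_eq_si_Suc[OF assms] ti_in_prefix_vertices[of j] si_in[OF assms] assms by simp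
  show "prefix_vertices j \<inter> Vi (Suc j) \<subseteq> {si (Suc j)}"
  proof
    fix x assume x: "x \<in> prefix_vertices j \<inter> Vi (Suc j)"
    then obtain i where "i \<le> j" "x \<in> Vi i"
      unfolding prefix_vertices_def by blast
    then have "Suc j = Suc i \<and> x = ti i"
      using shared_vertex[of i "Suc j" x] x assms by simp
    then show "x \<in> {si (Suc j)}"
      using ti_eq_si_Suc[OF assms] by simp
  qed
qed

lemma Vi_Suc_eq_prefix_vertices_diff:
  assumes "Suc j < k"
  shows "Vi (Suc j) = prefix_vertices (Suc j) - (prefix_vertices j - {si (Suc j)})"
  using prefix_vertices_Suc[of j] prefix_vertices_inter_Suc[OF assms] by blast

lemma card_prefix_vertices_Suc:
  assumes "Suc j < k"
  shows "card (prefix_vertices (Suc j)) + 1 = card (prefix_vertices j) + card (Vi (Suc j))"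
  using card_Un_Int[OF finite_prefix_vertices[of j] finite_Vi[OF assms]] assms
    prefix_vertices_Suc[of j] prefix_vertices_inter_Suc[OF assms] by simp

lemma two_le_card_Vi:
  assumes "i < k"
  shows "2 \<le> card (Vi i)"
proof -
  have "card {si i, ti i} \<le> card (Vi i)"
    using si_in ti_in finite_Vi assms by (intro card_mono) auto
  then show ?thesis
    using si_ne_ti[OF assms] by simp
qed

lemma card_prefix_vertices_less:
  assumes "j < m" and "m < k"
  shows "card (prefix_vertices j) < card (prefix_vertices m)"
  using assms
proof (induction m)
  case 0
  then show ?case by simp
next
  case (Suc m)
  have "card (prefix_vertices m) < card (prefix_vertices (Suc m))"
    using card_prefix_vertices_Suc[OF Suc.prems(2)] two_le_card_Vi[OF Suc.prems(2)] by simp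
  then show ?case
    using Suc by (cases "j = m") auto
qed

lemma card_prefix_vertices:
  "j < k \<Longrightarrow> card (prefix_vertices j) + j = (\<Sum>i\<le>j. card (Vi i))"
proof (induction j)
  case 0
  then show ?case
    by (simp add: prefix_vertices_0)
next
  case (Suc j)
  then show ?case
    using card_prefix_vertices_Suc[OF Suc.prems] by simp
qed

lemma sum_card_Vi: "(\<Sum>i<k. card (Vi i)) = card V + (k - 1)"
proof -
  have "{..k - 1} = {..<k}"
    using two_le_k by auto
  then show ?thesis
    using card_prefix_vertices[of "k - 1"] prefix_vertices_last two_le_k by simp
qed

lemma sum_card_Vi_le: "(\<Sum>i<k. card (Vi i)) \<le> 2 * card V"
proof -
  have "2 * k \<le> (\<Sum>i<k. card (Vi i))"
    using sum_mono[of "{..<k}" "\<lambda>_. 2" "\<lambda>i. card (Vi i)"] two_le_card_Vi by simp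
  then show ?thesis
    using sum_card_Vi by linarith
qed

lemma prefix_vertices_reach_avoiding_closed:
  assumes "reach (avoiding E (ti j)) a x" and "a \<in> prefix_vertices j" and "Suc j < k"
  shows "x \<in> prefix_vertices j"
  using assms(1,2)
proof (induction rule: rtranclp_induct)
  case base
  then show ?case .
next
  case (step y z)
  then have y: "y \<in> prefix_vertices j" "y \<noteq> ti j" and "{y, z} \<in> E"
    unfolding avoiding_def by auto
  then obtain m where m: "m < k" "{y, z} \<in> Ei m"
    using E_eq by blast
  then have yz: "y \<in> Vi m" "z \<in> Vi m"
    using simple_graph_edge[OF simple_graph_Vi] by blast+
  obtain i where i: "i \<le> j" "y \<in> Vi i"
    using y(1) unfolding prefix_vertices_def by blast
  show ?case
  proof (cases "m \<le> j")
    case True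
    then show ?thesis
      using Vi_subset_prefix_vertices yz(2) by blast
  next
    case False
    then have "m = Suc i \<and> y = ti i"
      using shared_vertex[of i m y] i yz(1) m(1) by simp
    then have "y = ti j"
      using False i(1) by (simp add: not_less_eq_eq)
    then show ?thesis
      using y(2) by simp
  qed
qed

lemma connected_graph_Union:
  assumes "\<And>i. i < k \<Longrightarrow> connected_graph (Vi i) (T i)"
  shows "connected_graph V (\<Union>i<k. T i)"
proof (rule connected_graphI)
  let ?U = "\<Union>i<k. T i"
  have reach_comp: "reach ?U (si i) x" if "i < k" "x \<in> Vi i" for i x
  proof -
    have "reach (T i) (si i) x"
      using assms[OF that(1)] si_in[OF that(1)] that(2) unfolding connected_graph_def by blast
    then show ?thesis
      by (rule reach_mono) (use that(1) in blast)
  qed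
  fix x assume "x \<in> V"
  then have "x \<in> (\<Union>i<k. Vi i)"
    using V_eq by simp
  then obtain i where i: "i < k" "x \<in> Vi i"
    by blast
  have "reach ?U s (si i)"
    by (rule reach_to_si) (use i(1) reach_comp ti_in in auto)
  then show "reach ?U s x"
    using reach_comp[OF i] by (rule rtranclp_trans)
qed

lemma card_Union_spanning_trees:
  assumes T: "\<And>i. i < k \<Longrightarrow> T i \<in> spanning_trees (Vi i) (Ei i)"
  shows "card (\<Union>i<k. T i) + 1 = card V"
proof -
  have sub: "T i \<subseteq> Ei i" and card: "card (T i) + 1 = card (Vi i)" if "i < k" for i
    using T[OF that] unfolding spanning_trees_def by blast+
  have "finite (T i)" if "i < k" for i
    using sub[OF that] simple_graph_finite_edges[OF simple_graph_Vi[OF that]] by (rule finite_subset)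
  moreover have "T i \<inter> T j = {}" if "i < k" "j < k" "i \<noteq> j" for i j
    using sub Ei_disjoint[OF that] that by blast
  ultimately have "card (\<Union>i<k. T i) = (\<Sum>i<k. card (T i))"
    by (intro card_UN_disjoint) auto
  also have "\<dots> + k = (\<Sum>i<k. card (T i) + 1)"
    by (subst sum.distrib) simp
  also have "\<dots> = (\<Sum>i<k. card (Vi i))"
    using card by simp
  finally have "card (\<Union>i<k. T i) + k = card V + (k - 1)"
    using sum_card_Vi by simp
  then show ?thesis
    using two_le_k by simp
qed

lemma spanning_trees_Union:
  assumes "\<And>i. i < k \<Longrightarrow> T i \<in> spanning_trees (Vi i) (Ei i)"
  shows "(\<Union>i<k. T i) \<in> spanning_trees V E"
proof -
  have "(\<Union>i<k. T i) \<subseteq> E"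
    using assms Ei_subset unfolding spanning_trees_def by blast
  moreover have "connected_graph V (\<Union>i<k. T i)"
    using assms unfolding spanning_trees_def by (intro connected_graph_Union) blast
  ultimately show ?thesis
    using card_Union_spanning_trees[OF assms] unfolding spanning_trees_def by blast
qed

end

section \<open>Oriented series-parallel graphs\<close>

lemma parallel_combD:
  assumes "parallel_comb V E s t comps"
  shows "2 \<le> length comps"
    and "\<And>i. i < length comps \<Longrightarrow> cs (comps ! i) = s \<and> ct (comps ! i) = t"
    and "\<And>i j. i < length comps \<Longrightarrow> j < length comps \<Longrightarrow> i \<noteq> j \<Longrightarrow>
           cV (comps ! i) \<inter> cV (comps ! j) = {s, t}"
    and "V = (\<Union>i<length comps. cV (comps ! i))"
    and "E = (\<Union>i<length comps. cE (comps ! i))"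
  using assms unfolding parallel_comb_def Let_def by simp_all

lemma two_terminal_parallel:
  assumes par: "parallel_comb V E s t comps"
    and comp: "\<And>i. i < length comps \<Longrightarrow> two_terminal (cV (comps ! i)) (cE (comps ! i)) s t"
  shows "two_terminal V E s t"
proof -
  have "simple_graph V E"
    unfolding parallel_combD(4,5)[OF par] using comp
    by (intro simple_graph_UN) (auto simp: two_terminal_def)
  moreover have "0 < length comps"
    using parallel_combD(1)[OF par] by linarith
  then have "s \<in> V" "t \<in> V" "s \<noteq> t"
    using comp[of 0] parallel_combD(4)[OF par] unfolding two_terminal_def by auto
  ultimately show ?thesis
    unfolding two_terminal_def by blast
qed

lemma st_connected_parallel:
  assumes par: "parallel_comb V E s t comps"
    and comp: "\<And>i. i < length comps \<Longrightarrow> st_connected (cV (comps ! i)) (cE (comps ! i)) s t"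
  shows "st_connected V E s t"
proof -
  have sub: "cE (comps ! i) \<subseteq> E" if "i < length comps" for i
    using parallel_combD(5)[OF par] that by blast
  have "0 < length comps"
    using parallel_combD(1)[OF par] by linarith
  then have "reach (cE (comps ! 0)) s t"
    using comp unfolding st_connected_def by blast
  then have "reach E s t"
    using sub[OF \<open>0 < length comps\<close>] by (rule reach_mono)
  moreover have "reach (avoiding E t) s x" if "x \<in> V - {t}" for x
  proof -
    have "x \<in> (\<Union>i<length comps. cV (comps ! i))"
      using that parallel_combD(4)[OF par] by simp
    then obtain i where i: "i < length comps" "x \<in> cV (comps ! i)"
      by blast
    then have "reach (avoiding (cE (comps ! i)) t) s x"
      using comp[OF i(1)] that unfolding st_connected_def by blast
    then show ?thesis
      using avoiding_mono[OF sub[OF i(1)]] by (rule reach_mono)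
  qed
  ultimately show ?thesis
    unfolding st_connected_def by blast
qed

lemma osp_two_terminal: "osp V E s t \<Longrightarrow> two_terminal V E s t"
proof (induction rule: osp.induct)
  case (edge s t)
  then show ?case
    unfolding two_terminal_def simple_graph_def by auto
next
  case (serial V E s t comps)
  then interpret serial_chain V E s t comps
    by unfold_locales (auto simp: list_all_length)
  show ?case
    by (rule two_terminal_serial)
next
  case (parallel V E s t comps)
  show ?case
    by (rule two_terminal_parallel[OF parallel.hyps(1)])
      (use parallel.IH in \<open>auto simp: list_all_length parallel_combD(2)[OF parallel.hyps(1)]\<close>)
qed

lemma serial_chainI:
  "serial_comb V E s t comps \<Longrightarrow> list_all (\<lambda>c. osp (cV c) (cE c) (cs c) (ct c)) comps \<Longrightarrow>
    serial_chain V E s t comps"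
  by unfold_locales (auto simp: list_all_length intro: osp_two_terminal)

lemma osp_st_connected: "osp V E s t \<Longrightarrow> st_connected V E s t"
proof (induction rule: osp.induct)
  case (edge s t)
  then show ?case
    unfolding st_connected_def by auto
next
  case (serial V E s t comps)
  then interpret serial_chain V E s t comps
    by (auto intro!: serial_chainI simp: list_all_length)
  show ?case
    by (rule st_connected_serial) (use serial.IH in \<open>auto simp: list_all_length\<close>)
next
  case (parallel V E s t comps)
  show ?case
    by (rule st_connected_parallel[OF parallel.hyps(1)])
      (use parallel.IH in \<open>auto simp: list_all_length parallel_combD(2)[OF parallel.hyps(1)]\<close>)
qed

lemma osp_reach: "osp V E s t \<Longrightarrow> x \<in> V \<Longrightarrow> reach E s x"
  using osp_st_connected st_connected_reach by blast

lemma osp_spanning_trees_nonempty: "osp V E s t \<Longrightarrow> spanning_trees V E \<noteq> {}"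
  using osp_two_terminal[of V E s t] osp_reach[of V E s t]
  unfolding two_terminal_def by (intro spanning_tree_exists) auto

lemma non_serial_reach_avoiding:
  assumes "osp V E s t" and "non_serial V E s t" and w: "w \<in> V" "w \<noteq> s" "w \<noteq> t"
  shows "reach (avoiding E w) s t"
  using assms(1)
proof cases
  case edge
  then show ?thesis
    using w by auto
next
  case (serial comps)
  then show ?thesis
    using assms(2) unfolding non_serial_def is_serial_def serial_superedge_with_def by blast
next
  case (parallel comps)
  note par = parallel_combD[OF parallel(1)]
  have "w \<in> (\<Union>i<length comps. cV (comps ! i))"
    using w par(4) by simp
  then obtain m where m: "m < length comps" "w \<in> cV (comps ! m)"
    by blast
  define m' where "m' = (if m = 0 then 1 else (0::nat))"
  have m': "m' < length comps" "m' \<noteq> m"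
    using par(1) m(1) unfolding m'_def by auto
  have osp_m': "osp (cV (comps ! m')) (cE (comps ! m')) s t"
    using parallel(2) m'(1) par(2) by (auto simp: list_all_length)
  have "w \<notin> cV (comps ! m')"
    using par(3)[OF m(1) m'(1)] m'(2) m(2) w by blast
  then have "cE (comps ! m') \<subseteq> avoiding E w"
    using osp_two_terminal[OF osp_m'] par(5) m'(1) simple_graph_edge_subset
    unfolding two_terminal_def avoiding_def by blast
  moreover have "reach (cE (comps ! m')) s t"
    using osp_st_connected[OF osp_m'] unfolding st_connected_def by blast
  ultimately show ?thesis
    using reach_mono by blast
qed

section \<open>Serial chains of non-serial parts\<close>

locale serial_chain_nonserial_parts = serial_chain +
  assumes osp_comp: "\<And>i. i < k \<Longrightarrow> osp (Vi i) (Ei i) (si i) (ti i)"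
    and non_serial_comp: "\<And>i. i < k \<Longrightarrow> non_serial (Vi i) (Ei i) (si i) (ti i)"
begin

lemma reach_avoiding_in_component:
  assumes "i < k" and "w \<notin> Vi i" and "x \<in> Vi i"
  shows "reach (avoiding E w) (si i) x"
  using osp_reach[OF osp_comp[OF assms(1)] assms(3)] component_edges_avoiding[OF assms(1,2)]
  by (rule reach_mono)

lemma reachable_avoiding_junction_subset:
  assumes j: "Suc j < k"
  shows "reachable_avoiding E (ti j) s \<subseteq> prefix_vertices j - {ti j}"
proof
  fix x assume "x \<in> reachable_avoiding E (ti j) s"
  then have r: "reach (avoiding E (ti j)) s x"
    unfolding reachable_avoiding_def by simp
  have "s \<in> prefix_vertices j"
    using s_in_Vi_0 Vi_subset_prefix_vertices[of 0 j] by blast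
  then have "x \<in> prefix_vertices j"
    using prefix_vertices_reach_avoiding_closed[OF r _ j] by blast
  moreover have "s \<noteq> ti j"
    using s_notin_later[of "Suc j"] si_in[OF j] ti_eq_si_Suc[OF j] j by auto
  then have "x \<noteq> ti j"
    using reach_avoiding_ne[OF r] by metis
  ultimately show "x \<in> prefix_vertices j - {ti j}"
    by blast
qed

lemma prefix_vertices_subset_reachable_avoiding:
  assumes j: "Suc j < k"
  shows "prefix_vertices j - {ti j} \<subseteq> reachable_avoiding E (ti j) s"
proof
  fix x assume "x \<in> prefix_vertices j - {ti j}"
  then obtain i where i: "i \<le> j" "x \<in> Vi i" "x \<noteq> ti j"
    unfolding prefix_vertices_def by blast
  then have "i < k"
    using j by simp
  have "reach (avoiding E (ti j)) s (si i)"
  proof (rule reach_to_si[OF \<open>i < k\<close>])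
    fix m assume "m < i"
    then show "reach (avoiding E (ti j)) (si m) (ti m)"
      using reach_avoiding_in_component ti_notin_earlier ti_in i(1) j by simp
  qed
  moreover have "reach (avoiding E (ti j)) (si i) x"
  proof (cases "i < j")
    case True
    then show ?thesis
      using reach_avoiding_in_component[OF \<open>i < k\<close> ti_notin_earlier i(2)] j by simp
  next
    case False
    then have "i = j"
      using i(1) by simp
    then have "reach (avoiding (Ei i) (ti i)) (si i) x"
      using osp_st_connected[OF osp_comp[OF \<open>i < k\<close>]] i unfolding st_connected_def by blast
    then show ?thesis
      using avoiding_mono[OF Ei_subset[OF \<open>i < k\<close>]] \<open>i = j\<close> by (auto intro: reach_mono)
  qed
  ultimately show "x \<in> reachable_avoiding E (ti j) s"
    unfolding reachable_avoiding_def by (blast intro: rtranclp_trans)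
qed

lemma reachable_avoiding_junction:
  "Suc j < k \<Longrightarrow> reachable_avoiding E (ti j) s = prefix_vertices j - {ti j}"
  using reachable_avoiding_junction_subset prefix_vertices_subset_reachable_avoiding by blast

lemma junction_if_separating:
  assumes w: "w \<in> V" "w \<noteq> s" "w \<noteq> t" and sep: "t \<notin> reachable_avoiding E w s"
  shows "\<exists>j. Suc j < k \<and> w = ti j"
proof (rule ccontr)
  assume no_junction: "\<nexists>j. Suc j < k \<and> w = ti j"
  have "w \<in> (\<Union>i<k. Vi i)"
    using w(1) V_eq by simp
  then obtain i where i: "i < k" "w \<in> Vi i"
    by blast
  have elsewhere: "w \<notin> Vi m" if "m < k" "m \<noteq> i" for m
    using shared_vertex_junction[OF i(1) that(1) _ i(2)] that(2) no_junction by metis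
  have "w \<noteq> si i"
  proof (cases i)
    case 0
    then show ?thesis
      using si_0 w(2) by simp
  next
    case (Suc j)
    then show ?thesis
      using ti_eq_si_Suc[of j] i(1) no_junction by auto
  qed
  moreover have "w \<noteq> ti i"
    using ti_last w(3) i(1) no_junction by (metis Suc_lessI diff_Suc_1)
  ultimately have "reach (avoiding (Ei i) w) (si i) (ti i)"
    using non_serial_reach_avoiding[OF osp_comp non_serial_comp] i by blast
  then have "reach (avoiding E w) (si i) (ti i)"
    using avoiding_mono[OF Ei_subset[OF i(1)]] by (rule reach_mono)
  moreover have "reach (avoiding E w) s (si i)"
    by (rule reach_to_si[OF i(1)]) (use reach_avoiding_in_component elsewhere ti_in i(1) in simp)
  moreover have "reach (avoiding E w) (ti i) t"
    by (rule reach_from_ti[OF i(1)]) (use reach_avoiding_in_component elsewhere ti_in in simp)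
  ultimately have "reach (avoiding E w) s t"
    by (meson rtranclp_trans)
  then show False
    using sep unfolding reachable_avoiding_def by simp
qed

lemma junction_eq_if_card_reachable_avoiding_eq:
  assumes "Suc j < k" and "Suc m < k"
    and "card (reachable_avoiding E (ti m) s) = card (reachable_avoiding E (ti j) s)"
  shows "m = j"
proof -
  have "card (prefix_vertices i) = Suc (card (reachable_avoiding E (ti i) s))" if "Suc i < k" for i
    using reachable_avoiding_junction[OF that] that
      card_Suc_Diff1[OF finite_prefix_vertices ti_in_prefix_vertices] by simp
  then have "card (prefix_vertices m) = card (prefix_vertices j)"
    using assms by simp
  then show ?thesis
    using card_prefix_vertices_less assms(1,2) by (metis Suc_lessD less_irrefl_nat nat_neq_iff)
qed

lemma aut_maps_junction_to_junction:
  assumes \<sigma>: "\<sigma> \<in> aut_or V E s t" and j: "Suc j < k"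
  shows "\<exists>m. Suc m < k \<and> \<sigma> (ti j) = ti m"
proof -
  have "s \<in> V" "t \<in> V" and simple: "simple_graph V E"
    using two_terminal_serial unfolding two_terminal_def by auto
  let ?A = "reachable_avoiding E (ti j) s"
  have "j < k"
    using j by simp
  then have w: "ti j \<in> V"
    using ti_in Vi_subset by blast
  have A: "?A = prefix_vertices j - {ti j}"
    by (rule reachable_avoiding_junction[OF j])
  have "s \<in> ?A"
    unfolding reachable_avoiding_def by simp
  then have "ti j \<noteq> s"
    using A by blast
  moreover have "ti j \<noteq> t"
    using ti_in_prefix_vertices[OF \<open>j < k\<close>] t_notin_prefix_vertices[OF j] by blast
  ultimately have ne: "\<sigma> (ti j) \<noteq> s" "\<sigma> (ti j) \<noteq> t"
    using inj_on_eq_iff[OF aut_or_inj_on[OF \<sigma>]] w \<open>s \<in> V\<close> \<open>t \<in> V\<close> aut_orD(3,4)[OF \<sigma>] by metis+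
  have "t \<notin> ?A"
    using A t_notin_prefix_vertices[OF j] by blast
  moreover have "\<sigma> t \<in> \<sigma> ` ?A \<longleftrightarrow> t \<in> ?A"
    using aut_or_inj_on[OF \<sigma>] \<open>t \<in> V\<close> reachable_avoiding_subset[OF simple \<open>s \<in> V\<close>]
    by (rule inj_on_image_mem_iff)
  ultimately have "t \<notin> \<sigma> ` ?A"
    using aut_orD(4)[OF \<sigma>] by simp
  then show ?thesis
    using junction_if_separating ne aut_or_in[OF \<sigma> w]
      aut_or_image_reachable_avoiding[OF \<sigma> two_terminal_serial w] by auto
qed

lemma aut_fixes_junction:
  assumes \<sigma>: "\<sigma> \<in> aut_or V E s t" and j: "Suc j < k"
  shows "\<sigma> (ti j) = ti j"
proof -
  obtain m where m: "Suc m < k" "\<sigma> (ti j) = ti m"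
    using aut_maps_junction_to_junction[OF assms] by blast
  have "s \<in> V" and simple: "simple_graph V E"
    using two_terminal_serial unfolding two_terminal_def by auto
  have "j < k"
    using j by simp
  then have "ti j \<in> V"
    using ti_in Vi_subset by blast
  have "card (reachable_avoiding E (ti m) s) = card (\<sigma> ` reachable_avoiding E (ti j) s)"
    using aut_or_image_reachable_avoiding[OF \<sigma> two_terminal_serial \<open>ti j \<in> V\<close>] m(2) by simp
  also have "\<dots> = card (reachable_avoiding E (ti j) s)"
    by (rule card_image[OF inj_on_subset[OF aut_or_inj_on[OF \<sigma>]
          reachable_avoiding_subset[OF simple \<open>s \<in> V\<close>]]])
  finally have "m = j"
    using junction_eq_if_card_reachable_avoiding_eq[OF j m(1)] by blast
  then show ?thesis
    using m(2) by simp
qed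

lemma aut_fixes_si: "\<sigma> \<in> aut_or V E s t \<Longrightarrow> i < k \<Longrightarrow> \<sigma> (si i) = si i"
  using aut_orD(3) si_0 aut_fixes_junction[of \<sigma> "i - 1"] ti_eq_si_Suc[of "i - 1"]
  by (cases i) auto

lemma aut_fixes_ti: "\<sigma> \<in> aut_or V E s t \<Longrightarrow> i < k \<Longrightarrow> \<sigma> (ti i) = ti i"
  using aut_orD(4) ti_last aut_fixes_junction[of \<sigma> i]
  by (metis Suc_lessI diff_Suc_1)

lemma aut_image_prefix_vertices:
  assumes \<sigma>: "\<sigma> \<in> aut_or V E s t" and "j < k"
  shows "\<sigma> ` prefix_vertices j = prefix_vertices j"
proof (cases "Suc j < k")
  case True
  have "prefix_vertices j = insert (ti j) (reachable_avoiding E (ti j) s)"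
    using reachable_avoiding_junction[OF True] ti_in_prefix_vertices[OF \<open>j < k\<close>] by blast
  moreover have "ti j \<in> V"
    using ti_in Vi_subset \<open>j < k\<close> by blast
  ultimately show ?thesis
    using aut_or_image_reachable_avoiding[OF \<sigma> two_terminal_serial] aut_fixes_ti[OF \<sigma> \<open>j < k\<close>]
    by simp
next
  case False
  then have "j = k - 1"
    using \<open>j < k\<close> by simp
  then show ?thesis
    using prefix_vertices_last aut_orD(1)[OF \<sigma>] by (simp add: bij_betw_imp_surj_on)
qed

lemma aut_image_Vi:
  assumes \<sigma>: "\<sigma> \<in> aut_or V E s t" and "i < k"
  shows "\<sigma> ` Vi i = Vi i"
proof (cases i)
  case 0
  then show ?thesis
    using aut_image_prefix_vertices[OF \<sigma>, of 0] \<open>i < k\<close> prefix_vertices_0 by simp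
next
  case (Suc j)
  have "j < k" "Suc j < k"
    using Suc \<open>i < k\<close> by simp_all
  let ?P = "prefix_vertices (Suc j)" and ?Q = "prefix_vertices j - {si (Suc j)}"
  have inj: "inj_on \<sigma> V"
    by (rule aut_or_inj_on[OF \<sigma>])
  have sub: "?P \<subseteq> V" "prefix_vertices j \<subseteq> V" "{si (Suc j)} \<subseteq> V"
    using prefix_vertices_subset \<open>j < k\<close> \<open>Suc j < k\<close> si_in Vi_subset by blast+
  have "\<sigma> ` ?Q = \<sigma> ` prefix_vertices j - \<sigma> ` {si (Suc j)}"
    using inj_on_image_set_diff[OF inj] sub(2,3) by blast
  also have "\<dots> = ?Q"
    using aut_image_prefix_vertices[OF \<sigma> \<open>j < k\<close>] aut_fixes_si[OF \<sigma> \<open>Suc j < k\<close>] by simp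
  finally have "\<sigma> ` (?P - ?Q) = \<sigma> ` ?P - ?Q"
    using inj_on_image_set_diff[OF inj] sub by blast
  then show ?thesis
    using Vi_Suc_eq_prefix_vertices_diff[OF \<open>Suc j < k\<close>]
      aut_image_prefix_vertices[OF \<sigma> \<open>Suc j < k\<close>] Suc by simp
qed

lemma aut_restrict_component:
  assumes \<sigma>: "\<sigma> \<in> aut_or V E s t" and "i < k"
  shows "\<sigma> \<in> aut_or (Vi i) (Ei i) (si i) (ti i)"
proof -
  have inj: "inj_on \<sigma> (Vi i)"
    using aut_or_inj_on[OF \<sigma>] Vi_subset[OF \<open>i < k\<close>] by (rule inj_on_subset)
  then have "bij_betw \<sigma> (Vi i) (Vi i)"
    using aut_image_Vi[OF assms] unfolding bij_betw_def by blast
  moreover have "{\<sigma> u, \<sigma> v} \<in> Ei i \<longleftrightarrow> {u, v} \<in> Ei i" if "u \<in> Vi i" "v \<in> Vi i" for u v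
  proof -
    have "\<sigma> u \<in> Vi i" "\<sigma> v \<in> Vi i"
      using aut_image_Vi[OF assms] that by blast+
    moreover have "u \<in> V" "v \<in> V"
      using Vi_subset[OF \<open>i < k\<close>] that by blast+
    ultimately show ?thesis
      using edge_in_Ei_iff[OF \<open>i < k\<close>] aut_orD(2)[OF \<sigma>] that by simp
  qed
  ultimately show ?thesis
    unfolding aut_or_def using aut_fixes_si[OF assms] aut_fixes_ti[OF assms] by blast
qed

lemma aut_image_edge_in_Ei_iff:
  assumes \<sigma>: "\<sigma> \<in> aut_or V E s t" and "i < k" and "e \<in> E"
  shows "\<sigma> ` e \<in> Ei i \<longleftrightarrow> e \<in> Ei i"
proof -
  obtain m where m: "m < k" "e \<in> Ei m"
    using assms(3) E_eq by blast
  then obtain u v where e: "e = {u, v}" "u \<in> Vi m" "v \<in> Vi m"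
    using simple_graph_edgeE[OF simple_graph_Vi] by metis
  then have "\<sigma> ` e \<in> Ei m"
    using aut_restrict_component[OF \<sigma> m(1)] m(2) unfolding aut_or_def by auto
  then show ?thesis
    using m Ei_disjoint[OF \<open>i < k\<close> m(1)] by (cases "m = i") auto
qed

definition some_tree :: "nat \<Rightarrow> nat set set" where
  "some_tree i = (SOME T. T \<in> spanning_trees (Vi i) (Ei i))"

definition tree_extension :: "nat \<Rightarrow> nat set set \<Rightarrow> nat set set" where
  "tree_extension i T = (\<Union>j<k. if j = i then T else some_tree j)"

lemma some_tree_spanning: "i < k \<Longrightarrow> some_tree i \<in> spanning_trees (Vi i) (Ei i)"
  unfolding some_tree_def using osp_spanning_trees_nonempty[OF osp_comp] by (simp add: some_in_eq)

lemma tree_extension_spanning: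
  assumes "i < k" and "T \<in> spanning_trees (Vi i) (Ei i)"
  shows "tree_extension i T \<in> spanning_trees V E"
  unfolding tree_extension_def using assms some_tree_spanning by (intro spanning_trees_Union) auto

lemma tree_extension_inter_Ei:
  assumes "i < k" and "T \<subseteq> Ei i"
  shows "tree_extension i T \<inter> Ei i = T"
proof -
  have "some_tree j \<inter> Ei i = {}" if "j < k" "j \<noteq> i" for j
    using some_tree_spanning[OF that(1)] Ei_disjoint[OF that(1) assms(1) that(2)]
    unfolding spanning_trees_def by blast
  then show ?thesis
    unfolding tree_extension_def using assms by (auto split: if_splits)
qed

lemma tree_image_inter_Ei:
  assumes "\<sigma> \<in> aut_or V E s t" and "i < k" and "X \<subseteq> E"
  shows "tree_image \<sigma> X \<inter> Ei i = tree_image \<sigma> (X \<inter> Ei i)"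
  unfolding tree_image_def using aut_image_edge_in_Ei_iff[OF assms(1,2)] assms(3) by blast

lemma tree_orbit_component_subset:
  assumes "i < k" and T: "T1 \<in> spanning_trees (Vi i) (Ei i)" "T2 \<in> spanning_trees (Vi i) (Ei i)"
    and eq: "tree_orbit (aut_or V E s t) (tree_extension i T1) =
             tree_orbit (aut_or V E s t) (tree_extension i T2)"
  shows "tree_orbit (aut_or (Vi i) (Ei i) (si i) (ti i)) T1 \<subseteq>
         tree_orbit (aut_or (Vi i) (Ei i) (si i) (ti i)) T2"
proof -
  have sub: "T1 \<subseteq> Ei i" "T2 \<subseteq> Ei i"
    using T unfolding spanning_trees_def by blast+
  have "tree_extension i T1 \<in> tree_orbit (aut_or V E s t) (tree_extension i T2)"
    using tree_orbit_self eq by metis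
  then obtain \<sigma> where \<sigma>: "\<sigma> \<in> aut_or V E s t"
    and ext: "tree_extension i T1 = tree_image \<sigma> (tree_extension i T2)"
    unfolding tree_orbit_def by blast
  have "tree_extension i T2 \<subseteq> E"
    using tree_extension_spanning[OF assms(1) T(2)] unfolding spanning_trees_def by blast
  then have "T1 = tree_image \<sigma> T2"
    using ext tree_image_inter_Ei[OF \<sigma> assms(1)] tree_extension_inter_Ei[OF assms(1)] sub by metis
  then show ?thesis
    using tree_orbit_tree_image_subset[OF aut_restrict_component[OF \<sigma> assms(1)]] by simp
qed

lemma num_st_orbits_component_le:
  assumes "i < k"
  shows "num_st_orbits (Vi i) (Ei i) (si i) (ti i) \<le> num_st_orbits V E s t"
  unfolding num_st_orbits_def st_orbits_eq
proof (rule card_image_le_if_factors)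
  show "finite (tree_orbit (aut_or V E s t) ` spanning_trees V E)"
    using two_terminal_serial finite_spanning_trees unfolding two_terminal_def by blast
  show "tree_extension i ` spanning_trees (Vi i) (Ei i) \<subseteq> spanning_trees V E"
    using tree_extension_spanning[OF assms] by blast
  show "tree_orbit (aut_or (Vi i) (Ei i) (si i) (ti i)) T1 =
        tree_orbit (aut_or (Vi i) (Ei i) (si i) (ti i)) T2"
    if "T1 \<in> spanning_trees (Vi i) (Ei i)" "T2 \<in> spanning_trees (Vi i) (Ei i)"
      "tree_orbit (aut_or V E s t) (tree_extension i T1) =
       tree_orbit (aut_or V E s t) (tree_extension i T2)" for T1 T2
    using tree_orbit_component_subset[OF assms that] tree_orbit_component_subset[OF assms that(2,1)]
      that(3) by auto
qed

lemma sum_weighted_num_st_orbits_le: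
  "(\<Sum>i<k. card (Vi i) * num_st_orbits (Vi i) (Ei i) (si i) (ti i)) \<le>
   2 * card V * num_st_orbits V E s t"
proof -
  have "(\<Sum>i<k. card (Vi i) * num_st_orbits (Vi i) (Ei i) (si i) (ti i)) \<le>
        (\<Sum>i<k. card (Vi i) * num_st_orbits V E s t)"
    using num_st_orbits_component_le by (intro sum_mono mult_left_mono) auto
  also have "\<dots> = (\<Sum>i<k. card (Vi i)) * num_st_orbits V E s t"
    by (simp add: sum_distrib_right)
  also have "\<dots> \<le> 2 * card V * num_st_orbits V E s t"
    using sum_card_Vi_le by simp
  finally show ?thesis .
qed

end

lemma serial_chain_nonserial_partsI:
  assumes "serial_superedge_with V E s t comps"
    and "\<forall>c\<in>set comps. non_serial (cV c) (cE c) (cs c) (ct c)"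
  shows "serial_chain_nonserial_parts V E s t comps"
proof -
  have comb: "serial_comb V E s t comps"
    and osp: "list_all (\<lambda>c. osp (cV c) (cE c) (cs c) (ct c)) comps"
    using assms(1) unfolding serial_superedge_with_def by auto
  interpret serial_chain V E s t comps
    using serial_chainI[OF comb osp] .
  show ?thesis
    by unfold_locales (use osp assms(2) in \<open>auto simp: list_all_length\<close>)
qed

theorem lemma5p13:
  shows "\<exists>C::real. C > 0 \<and>
    (\<forall>V E s t comps.
       serial_superedge_with V E s t comps \<longrightarrow>
       (\<forall>c\<in>set comps. non_serial (cV c) (cE c) (cs c) (ct c)) \<longrightarrow>
       (\<Sum>i<length comps. real (card (cV (comps ! i))) *
            real (num_st_orbits (cV (comps ! i)) (cE (comps ! i)) (cs (comps ! i)) (ct (comps ! i))))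
         \<le> C * real (card V) * real (num_st_orbits V E s t))"
proof (intro exI[of _ 2] conjI allI impI)
  fix V E s t comps
  assume "serial_superedge_with V E s t comps"
    and "\<forall>c\<in>set comps. non_serial (cV c) (cE c) (cs c) (ct c)"
  then interpret serial_chain_nonserial_parts V E s t comps
    by (rule serial_chain_nonserial_partsI)
  have "real (\<Sum>i<k. card (Vi i) * num_st_orbits (Vi i) (Ei i) (si i) (ti i)) \<le>
        real (2 * card V * num_st_orbits V E s t)"
    using sum_weighted_num_st_orbits_le by (simp only: of_nat_le_iff)
  then show "(\<Sum>i<k. real (card (Vi i)) * real (num_st_orbits (Vi i) (Ei i) (si i) (ti i)))
      \<le> 2 * real (card V) * real (num_st_orbits V E s t)"
    by simp
qed simp

end
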